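(* Let $\sigma_0,\sigma_1,\dots,\sigma_6$ be linearly independent real bivariate polynomials, each of exact degree $k$ and without multiple factors. Then there is a polynomial $\sigma$ in the linear span of $\sigma_1,\dots,\sigma_6$ which has no multiple factors and differs from $\sigma_0$ by a factor of degree at least three, i.e. $\sigma=\gamma r$ and $\sigma_0=\gamma_0 r$ with $\gamma,\gamma_0$ relatively prime and $\deg\gamma_0\ge3$.
   Context: A polynomial has a multiple factor if it is divisible by $r^2$ for some polynomial $r$ of degree $\ge1$. *)

theory Defs
  imports "HOL-Computational_Algebra.Polynomial"
begin

text \<open>Real bivariate polynomials are represented as real poly poly
  (polynomials in y whose coefficients are polynomials in x).\<close>

type_synonym bipoly = "real poly poly"

definition tdeg :: "bipoly \<Rightarrow> nat" where
  "tdeg p = (if p = 0 then 0 else Max {degree (coeff p i) + i | i. coeff p i \<noteq> 0})"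

definition rscale :: "real \<Rightarrow> bipoly \<Rightarrow> bipoly" where
  "rscale c p = smult [:c:] p"

definition has_multiple_factor :: "bipoly \<Rightarrow> bool" where
  "has_multiple_factor p \<longleftrightarrow> (\<exists>r. tdeg r \<ge> 1 \<and> r ^ 2 dvd p)"

end

theory Submission
  imports Defs "HOL-Computational_Algebra.Squarefree" "HOL-Computational_Algebra.Field_as_Ring"
    "HOL-Computational_Algebra.Polynomial_Factorial" "HOL-Analysis.Analysis"
begin

text \<open>Take \<open>s = \<sigma>\<^sub>1 + t g\<close> with \<open>g\<close> a suitable combination of \<open>\<sigma>\<^sub>2, \<dots>, \<sigma>\<^sub>6\<close>.
  In a pencil \<open>f + t g\<close> of coprime polynomials only finitely many members are not squarefree
  (a Wronskian argument), and a prime dividing two members divides \<open>f\<close> and \<open>g\<close>. So \<open>t\<close> and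
  \<open>g\<close> can be chosen with \<open>s\<close> squarefree and every prime dividing both \<open>s\<close> and \<open>\<sigma>\<^sub>0\<close> dividing
  all \<open>\<sigma>\<^sub>i\<close>. Then \<open>r = gcd s \<sigma>\<^sub>0\<close> is squarefree and divides every \<open>\<sigma>\<^sub>i\<close>; if \<open>\<sigma>\<^sub>0 = \<gamma>\<^sub>0 r\<close>
  with \<open>deg \<gamma>\<^sub>0 \<le> 2\<close>, the seven quotients \<open>\<sigma>\<^sub>i / r\<close> would lie in the six-dimensional space of
  polynomials of degree at most 2, contradicting linear independence.\<close>

lemma map_poly_add_hom:
  assumes "\<And>a b. h (a + b) = h a + h b" "h 0 = 0"
  shows "map_poly h (p + q) = map_poly h p + map_poly h q"
  by (rule poly_eqI) (simp add: coeff_map_poly assms)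

lemma map_poly_mult_hom:
  fixes h :: "'a::comm_semiring_1 \<Rightarrow> 'b::comm_semiring_1"
  assumes "\<And>a b. h (a + b) = h a + h b" "h 0 = 0" "\<And>a b. h (a * b) = h a * h b"
  shows "map_poly h (p * q) = map_poly h p * map_poly h q"
  by (rule poly_eqI)
    (simp add: coeff_map_poly coeff_mult assms sum_comp_morphism[of h, symmetric, unfolded o_def])

text \<open>The substitution \<open>p(x, y) \<mapsto> p(x T, T)\<close>: a polynomial in \<open>T\<close> whose coefficient
  of \<open>T ^ n\<close> is the homogeneous part of degree \<open>n\<close> of \<open>p\<close>, with \<open>y\<close> set to \<open>1\<close>.\<close>

definition subst_xT :: "real poly \<Rightarrow> bipoly" where
  "subst_xT c = poly (map_poly (\<lambda>a. [:[:a:]:]) c) [:0, [:0, 1:]:]"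

definition homogenize :: "bipoly \<Rightarrow> bipoly" where
  "homogenize p = poly (map_poly subst_xT p) [:0, 1:]"

lemma subst_xT_add: "subst_xT (a + b) = subst_xT a + subst_xT b"
  by (simp add: subst_xT_def map_poly_add_hom)

lemma subst_xT_0: "subst_xT 0 = 0"
  by (simp add: subst_xT_def)

lemma subst_xT_mult: "subst_xT (a * b) = subst_xT a * subst_xT b"
  by (simp add: subst_xT_def map_poly_mult_hom)

lemma homogenize_mult: "homogenize (p * q) = homogenize p * homogenize q"
  by (simp add: homogenize_def map_poly_mult_hom subst_xT_add subst_xT_0 subst_xT_mult)

lemma coeff_subst_xT: "coeff (subst_xT c) a = monom (coeff c a) a"
proof -
  have xT_pow: "([:0, [:0, 1:]:] :: bipoly) ^ i = monom (monom 1 i) i" for i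
  proof -
    have "([:0, [:0, 1:]:] :: bipoly) = monom (monom 1 1) 1"
      by (simp add: monom_altdef)
    then show ?thesis
      by (simp add: monom_power)
  qed
  have deg: "degree (map_poly (\<lambda>a. [:[:a:]:]) c) = degree c"
    by (rule degree_map_poly) simp
  have "subst_xT c = (\<Sum>i\<le>degree c. monom (monom (coeff c i) i) i)"
    unfolding subst_xT_def poly_altdef xT_pow deg
    by (intro sum.cong refl) (simp add: coeff_map_poly smult_monom monom_altdef)
  then show ?thesis
    by (cases "a \<le> degree c") (auto simp: coeff_sum coeff_monom intro!: coeff_eq_0)
qed

lemma coeff_homogenize:
  "coeff (homogenize p) n = (\<Sum>i\<le>n. monom (coeff (coeff p i) (n - i)) (n - i))"
proof -
  have T_pow: "([:0, 1:] :: bipoly) ^ i = monom 1 i" for i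
    by (simp add: monom_altdef)
  have "homogenize p = (\<Sum>i\<le>degree p. coeff (map_poly subst_xT p) i * monom 1 i)"
    unfolding homogenize_def poly_altdef T_pow
    by (intro sum.mono_neutral_left) (auto simp: map_poly_degree_leq intro: coeff_eq_0)
  also have "\<dots> = (\<Sum>i\<le>degree p. monom 1 i * subst_xT (coeff p i))"
    by (intro sum.cong) (auto simp: coeff_map_poly subst_xT_0 mult.commute)
  finally have "homogenize p = \<dots>" .
  then have "coeff (homogenize p) n =
      (\<Sum>i\<le>degree p. if i \<le> n then monom (coeff (coeff p i) (n - i)) (n - i) else 0)"
    by (simp add: coeff_sum coeff_monom_mult, intro sum.cong) (auto simp: coeff_subst_xT)
  also have "\<dots> = (\<Sum>i\<le>max n (degree p). if i \<le> n then monom (coeff (coeff p i) (n - i)) (n - i) else 0)"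
    by (intro sum.mono_neutral_left) (auto simp: coeff_eq_0)
  also have "\<dots> = (\<Sum>i\<le>n. monom (coeff (coeff p i) (n - i)) (n - i))"
    by (intro sum.mono_neutral_cong_right) (auto simp: coeff_eq_0)
  finally show ?thesis .
qed

lemma finite_tdeg_set: "finite {degree (coeff p i) + i | i. coeff p i \<noteq> 0}"
proof -
  have "{i. coeff p i \<noteq> 0} \<subseteq> {..degree p}"
    by (auto intro: le_degree)
  then have "finite {i. coeff p i \<noteq> 0}"
    by (rule finite_subset) simp
  then show ?thesis
    by (simp add: setcompr_eq_image)
qed

lemma le_tdeg:
  assumes "coeff (coeff p i) a \<noteq> 0"
  shows "a + i \<le> tdeg p"
proof -
  have "coeff p i \<noteq> 0" "p \<noteq> 0"
    using assms by auto
  then have "degree (coeff p i) + i \<le> tdeg p"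
    unfolding tdeg_def using finite_tdeg_set[of p] by (auto intro!: Max_ge)
  moreover have "a \<le> degree (coeff p i)"
    using assms by (rule le_degree)
  ultimately show ?thesis
    by simp
qed

lemma tdeg_attained:
  assumes "p \<noteq> 0"
  obtains i where "coeff p i \<noteq> 0" "degree (coeff p i) + i = tdeg p"
proof -
  have "{degree (coeff p i) + i | i. coeff p i \<noteq> 0} \<noteq> {}"
    using assms by (auto simp: poly_eq_iff)
  from Max_in[OF finite_tdeg_set this] have "tdeg p \<in> {degree (coeff p i) + i | i. coeff p i \<noteq> 0}"
    unfolding tdeg_def using assms by simp
  then show ?thesis
    using that by force
qed

lemma coeff_homogenize_tdeg_nonzero:
  assumes "p \<noteq> 0"
  shows "coeff (homogenize p) (tdeg p) \<noteq> 0"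
proof -
  obtain i where i: "coeff p i \<noteq> 0" "degree (coeff p i) + i = tdeg p"
    using tdeg_attained[OF assms] .
  define a where "a = degree (coeff p i)"
  have "coeff (coeff (homogenize p) (tdeg p)) a =
      (\<Sum>j\<le>tdeg p. if tdeg p - j = a then coeff (coeff p j) a else 0)"
    by (simp add: coeff_homogenize coeff_sum coeff_monom, intro sum.cong) auto
  also have "\<dots> = (\<Sum>j\<in>{i}. if tdeg p - j = a then coeff (coeff p j) a else 0)"
    using i unfolding a_def by (intro sum.mono_neutral_right) auto
  also have "\<dots> = lead_coeff (coeff p i)"
    using i by (simp add: a_def)
  also have "\<dots> \<noteq> 0"
    using i by simp
  finally show ?thesis
    by auto
qed

lemma degree_homogenize: "degree (homogenize p) = tdeg p"
proof (cases "p = 0")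
  case True
  then show ?thesis
    by (simp add: homogenize_def tdeg_def)
next
  case False
  have "coeff (homogenize p) n = 0" if "tdeg p < n" for n
  proof -
    have "coeff (coeff p i) (n - i) = 0" if "i \<le> n" for i
      using le_tdeg[of p i "n - i"] that \<open>tdeg p < n\<close>
      by (cases "coeff (coeff p i) (n - i) = 0") auto
    then show ?thesis
      by (simp add: coeff_homogenize)
  qed
  then have "degree (homogenize p) \<le> tdeg p"
    by (intro degree_le) auto
  moreover have "tdeg p \<le> degree (homogenize p)"
    using coeff_homogenize_tdeg_nonzero[OF False] by (rule le_degree)
  ultimately show ?thesis
    by simp
qed

lemma homogenize_eq_0_iff: "homogenize p = 0 \<longleftrightarrow> p = 0"
  using coeff_homogenize_tdeg_nonzero[of p] by (cases "p = 0") (auto simp: homogenize_def)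

lemma tdeg_mult:
  assumes "p \<noteq> 0" "q \<noteq> 0"
  shows "tdeg (p * q) = tdeg p + tdeg q"
  using assms
  by (simp flip: degree_homogenize add: homogenize_mult degree_mult_eq homogenize_eq_0_iff)

lemma is_unit_iff_tdeg_eq_0:
  fixes p :: bipoly
  assumes "p \<noteq> 0"
  shows "is_unit p \<longleftrightarrow> tdeg p = 0"
proof
  assume "is_unit p"
  then obtain q where q: "1 = p * q"
    by (rule dvdE)
  then have "tdeg (p * q) = tdeg p + tdeg q"
    by (intro tdeg_mult) auto
  moreover have "tdeg (1 :: bipoly) = 0"
    by (simp flip: degree_homogenize add: homogenize_def subst_xT_def map_poly_1)
  ultimately show "tdeg p = 0"
    by (simp flip: q)
next
  assume "tdeg p = 0"
  then have zero: "coeff (coeff p i) a = 0" if "0 < a + i" for a i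
    using le_tdeg[of p i a] that by (cases "coeff (coeff p i) a = 0") auto
  define c where "c = coeff (coeff p 0) 0"
  have "coeff p 0 = [:c:]"
    by (rule poly_eqI) (auto simp: c_def coeff_pCons zero split: nat.splits)
  moreover have "coeff p i = 0" if "0 < i" for i
    by (rule poly_eqI) (simp add: zero that)
  ultimately have "p = [:[:c:]:]"
    by (intro poly_eqI) (auto simp: coeff_pCons split: nat.splits)
  with assms show "is_unit p"
    by (simp add: is_unit_const_poly_iff dvd_field_iff)
qed

lemma not_has_multiple_factor_iff_squarefree: "\<not> has_multiple_factor p \<longleftrightarrow> squarefree p"
proof (cases "p = 0")
  case True
  have "tdeg ([:0, 1:] :: bipoly) \<ge> 1"
    using le_tdeg[of "[:0, 1:] :: bipoly" 1 0] by simp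
  then have "has_multiple_factor 0"
    unfolding has_multiple_factor_def by blast
  with True show ?thesis
    by simp
next
  case False
  have "1 \<le> tdeg r \<longleftrightarrow> \<not> is_unit r" if "r ^ 2 dvd p" for r
  proof -
    have "r \<noteq> 0"
      using that False by auto
    then show ?thesis
      using is_unit_iff_tdeg_eq_0 by auto
  qed
  then have "has_multiple_factor p \<longleftrightarrow> (\<exists>r. r ^ 2 dvd p \<and> \<not> is_unit r)"
    unfolding has_multiple_factor_def by (meson not_less_eq_eq)
  then show ?thesis
    by (simp add: squarefree_def)
qed

lemma finite_subsingleton:
  assumes "\<And>x y. x \<in> A \<Longrightarrow> y \<in> A \<Longrightarrow> x = y"
  shows "finite A"
proof (cases "A = {}")
  case False
  then obtain x where "x \<in> A"
    by blast
  with assms have "A \<subseteq> {x}"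
    by blast
  then show ?thesis
    by (rule finite_subset) simp
qed simp

lemma squarefree_dvdI:
  fixes r x :: "'a::factorial_semiring"
  assumes "squarefree r" "\<And>p. prime p \<Longrightarrow> p dvd r \<Longrightarrow> p dvd x"
  shows "r dvd x"
proof (cases "x = 0")
  case False
  show ?thesis
  proof (rule multiplicity_le_imp_dvd)
    show "r \<noteq> 0"
      using assms(1) by auto
    fix p :: 'a
    assume p: "prime p"
    have "multiplicity p r \<le> 1"
      using assms(1) \<open>r \<noteq> 0\<close> p by (auto simp: squarefree_factorial_semiring'')
    moreover have "1 \<le> multiplicity p x" if "multiplicity p r \<noteq> 0"
      using that assms(2)[OF p] p \<open>r \<noteq> 0\<close> False
      by (simp add: prime_multiplicity_gt_zero_iff Suc_le_eq)
    ultimately show "multiplicity p r \<le> multiplicity p x"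
      by linarith
  qed
qed simp

lemma gcd_dvd_if_common_prime_divisors_dvd:
  fixes a b y :: "'a::{factorial_semiring, semiring_gcd}"
  assumes "squarefree b" "\<And>p. prime p \<Longrightarrow> p dvd a \<Longrightarrow> p dvd b \<Longrightarrow> p dvd y"
  shows "gcd a b dvd y"
proof (rule squarefree_dvdI)
  show "squarefree (gcd a b)"
    using assms(1) by (rule squarefree_mono[rotated]) simp
  show "p dvd y" if "prime p" "p dvd gcd a b" for p
    using that assms(2) by simp
qed

lemma coprime_if_no_common_prime_divisor:
  fixes a b :: "'a::factorial_semiring"
  assumes "b \<noteq> 0" "\<And>p. prime p \<Longrightarrow> p dvd a \<Longrightarrow> p dvd b \<Longrightarrow> False"
  shows "coprime a b"
proof (rule coprimeI, rule ccontr)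
  fix e
  assume e: "e dvd a" "e dvd b" "\<not> is_unit e"
  moreover have "e \<noteq> 0"
    using e assms(1) by auto
  ultimately obtain p where "prime p" "p dvd e"
    using prime_divisor_exists by blast
  with e assms(2) show False
    by (meson dvd_trans)
qed

lemma common_divisor_of_pencil_members:
  fixes a b c d p :: "'a::{comm_ring_1, algebraic_semidom}"
  assumes "p dvd a + c * b" "p dvd a + d * b" "is_unit (c - d)"
  shows "p dvd a \<and> p dvd b"
proof -
  have "p dvd (c - d) * b"
    using dvd_diff[OF assms(1,2)] by (simp add: algebra_simps)
  then have "p dvd b"
    using assms(3) by (simp add: dvd_mult_unit_iff')
  moreover from this have "p dvd a"
    using assms(1) by (simp add: dvd_add_left_iff)
  ultimately show ?thesis
    by blast
qed

lemma square_dvd_imp_dvd_pderiv: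
  fixes f p :: "'a::idom poly"
  assumes "p ^ 2 dvd f"
  shows "p dvd pderiv f"
proof -
  obtain q where "f = p ^ 2 * q"
    using assms by blast
  then have "pderiv f = p * (2 * pderiv p * q + p * pderiv q)"
    by (simp add: pderiv_mult power2_eq_square algebra_simps)
  then show ?thesis
    by simp
qed

lemma square_dvd_pencil_imp_dvd_wronskian:
  fixes f g p :: "'a::idom poly"
  assumes "p ^ 2 dvd f + smult c g"
  shows "p dvd g * pderiv f - pderiv g * f"
proof -
  have "g * pderiv f - pderiv g * f = g * pderiv (f + smult c g) - pderiv g * (f + smult c g)"
    by (simp add: pderiv_add pderiv_smult algebra_simps)
  moreover have "p dvd pderiv (f + smult c g)"
    using assms by (rule square_dvd_imp_dvd_pderiv)
  moreover have "p dvd f + smult c g"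
    using assms by (auto simp: power2_eq_square intro: dvd_mult_left)
  ultimately show ?thesis
    by simp
qed

lemma pderiv_eq_0_if_wronskian_eq_0:
  fixes f g :: "'a::{factorial_ring_gcd, semiring_gcd_mult_normalize, ring_char_0} poly"
  assumes "coprime f g" "g * pderiv f = pderiv g * f"
  shows "pderiv f = 0 \<and> pderiv g = 0"
proof -
  have "f dvd g * pderiv f"
    by (simp add: assms(2))
  moreover have "g dvd pderiv g * f"
    by (simp flip: assms(2))
  ultimately have "f dvd pderiv f" "g dvd pderiv g"
    using assms(1) by (simp_all add: coprime_dvd_mult_right_iff coprime_dvd_mult_left_iff
        coprime_commute)
  then show ?thesis
    by (simp add: pderiv_eq_0_iff)
qed

text \<open>A member \<open>f + c g\<close> of the pencil divisible by the square of a prime \<open>p\<^sub>c\<close> makes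
  \<open>p\<^sub>c\<close> divide the Wronskian \<open>g f' - g' f\<close>, and distinct \<open>c\<close> give distinct \<open>p\<^sub>c\<close> by
  coprimality; so the Wronskian has infinitely many prime factors and vanishes.\<close>

lemma pderiv_eq_0_if_infinitely_many_nonsquarefree:
  fixes f g :: "'a::{factorial_ring_gcd, semiring_gcd_mult_normalize, ring_char_0} poly"
  assumes cop: "coprime f g" and inf: "infinite S"
    and unit_diff: "\<And>c d. c \<in> S \<Longrightarrow> d \<in> S \<Longrightarrow> c \<noteq> d \<Longrightarrow> is_unit (c - d)"
    and nonsqf: "\<And>c. c \<in> S \<Longrightarrow> \<not> squarefree (f + smult c g)"
  shows "pderiv f = 0 \<and> pderiv g = 0"
proof -
  have common: "is_unit p" if "p dvd f + smult c g" "p dvd f + smult d g" "c \<in> S" "d \<in> S" "c \<noteq> d"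
    for p c d
    using common_divisor_of_pencil_members[of p f "[:c:]" g "[:d:]"] that unit_diff cop
    by (auto simp: is_unit_const_poly_iff coprime_common_divisor)
  define S' where "S' = {c \<in> S. f + smult c g \<noteq> 0}"
  have "finite {c \<in> S. f + smult c g = 0}"
    using common[of 0] cop by (intro finite_subsingleton) auto
  moreover have "S \<subseteq> {c \<in> S. f + smult c g = 0} \<union> S'"
    by (auto simp: S'_def)
  ultimately have "infinite S'"
    using inf by (meson finite_UnI finite_subset)
  have "\<exists>p. prime p \<and> p ^ 2 dvd f + smult c g" if "c \<in> S'" for c
    using that nonsqf[of c] squarefree_factorial_semiring[of "f + smult c g"] by (auto simp: S'_def)
  then obtain P where P: "\<And>c. c \<in> S' \<Longrightarrow> prime (P c) \<and> P c ^ 2 dvd f + smult c g"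
    by metis
  then have P_dvd: "P c dvd f + smult c g" if "c \<in> S'" for c
    using that by (meson dvd_power dvd_trans zero_less_numeral)
  have "P c dvd g * pderiv f - pderiv g * f" if "c \<in> S'" for c
    using P[OF that] by (blast intro: square_dvd_pencil_imp_dvd_wronskian)
  then have "P ` S' \<subseteq> prime_factors (g * pderiv f - pderiv g * f)"
    if "g * pderiv f - pderiv g * f \<noteq> 0"
    using P that by (auto simp: in_prime_factors_iff)
  moreover have "inj_on P S'"
  proof (rule inj_onI, rule ccontr)
    fix c d
    assume cd: "c \<in> S'" "d \<in> S'" "P c = P d" "c \<noteq> d"
    then have "is_unit (P c)"
      using common[of "P c" c d] P_dvd[of c] P_dvd[of d] by (simp add: S'_def)
    with P[OF cd(1)] show False
      by (simp add: not_prime_unit)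
  qed
  ultimately have "g * pderiv f = pderiv g * f"
    using \<open>infinite S'\<close> by (metis finite_imageD finite_set_mset finite_subset right_minus_eq)
  with cop show ?thesis
    by (rule pderiv_eq_0_if_wronskian_eq_0)
qed

lemma squarefree_const_poly:
  fixes c :: "'a::{factorial_ring_gcd, semiring_gcd_mult_normalize}"
  assumes "squarefree c"
  shows "squarefree [:c:]"
proof (rule squarefreeI)
  fix x :: "'a poly"
  assume x: "x ^ 2 dvd [:c:]"
  have "c \<noteq> 0"
    using assms by auto
  have "degree (x ^ 2) \<le> degree [:c:]"
    using x \<open>c \<noteq> 0\<close> by (intro dvd_imp_degree_le) auto
  moreover have "x \<noteq> 0"
    using x \<open>c \<noteq> 0\<close> by auto
  ultimately have "degree x = 0"
    by (simp add: degree_power_eq)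
  then obtain d where d: "x = [:d:]"
    by (rule degree_eq_zeroE)
  with x have "d ^ 2 dvd c"
    by (simp add: power2_eq_square)
  with assms have "is_unit d"
    by (rule squarefreeD)
  then show "is_unit x"
    by (simp add: d is_unit_const_poly_iff)
qed

lemma coprime_const_polyD:
  fixes a b :: "'a::{factorial_ring_gcd, semiring_gcd_mult_normalize}"
  assumes "coprime [:a:] [:b:]"
  shows "coprime a b"
proof (rule coprimeI)
  fix d
  assume "d dvd a" "d dvd b"
  then have "[:d:] dvd [:a:]" "[:d:] dvd [:b:]"
    by simp_all
  with assms have "is_unit [:d:]"
    by (rule coprime_common_divisor)
  then show "is_unit d"
    by (simp add: is_unit_const_poly_iff)
qed

lemma finite_nonsquarefree_pencil:
  fixes f g :: "'a::{field_char_0, field_gcd} poly"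
  assumes cop: "coprime f g"
  shows "finite {t. \<not> squarefree (f + smult t g)}"
proof (rule ccontr)
  assume inf: "infinite {t. \<not> squarefree (f + smult t g)}"
  have "pderiv f = 0 \<and> pderiv g = 0"
    by (rule pderiv_eq_0_if_infinitely_many_nonsquarefree[OF cop inf]) (auto simp: dvd_field_iff)
  then obtain a b where ab: "f = [:a:]" "g = [:b:]"
    by (metis degree_eq_zeroE pderiv_eq_0_iff)
  with cop have "[:a, b:] \<noteq> 0"
    by auto
  moreover have "{t. \<not> squarefree (f + smult t g)} \<subseteq> {t. poly [:a, b:] t = 0}"
  proof
    fix t
    assume "t \<in> {t. \<not> squarefree (f + smult t g)}"
    then have "\<not> is_unit [:a + t * b:]"
      by (auto simp: ab)
    then show "t \<in> {t. poly [:a, b:] t = 0}"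
      by (simp add: is_unit_const_poly_iff dvd_field_iff algebra_simps)
  qed
  ultimately show False
    using inf poly_roots_finite finite_subset by blast
qed

lemma finite_nonsquarefree_pencil_bivariate:
  fixes f g :: "'a::{field_char_0, field_gcd} poly poly"
  assumes cop: "coprime f g"
  shows "finite {t. \<not> squarefree (f + smult [:t:] g)}"
proof (rule ccontr)
  define T where "T = {t. \<not> squarefree (f + smult [:t:] g)}"
  assume "infinite {t. \<not> squarefree (f + smult [:t:] g)}"
  then have inf: "infinite T"
    by (simp add: T_def)
  then have "infinite ((\<lambda>t. [:t:]) ` T)"
    by (simp add: finite_image_iff inj_on_def)
  then have "pderiv f = 0 \<and> pderiv g = 0"
    by (rule pderiv_eq_0_if_infinitely_many_nonsquarefree[OF cop])
      (auto simp: T_def is_unit_const_poly_iff dvd_field_iff)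
  then obtain a b where ab: "f = [:a:]" "g = [:b:]"
    by (metis degree_eq_zeroE pderiv_eq_0_iff)
  have "T \<subseteq> {t. \<not> squarefree (a + smult t b)}"
    using squarefree_const_poly by (auto simp: T_def ab)
  moreover have "coprime a b"
    using cop ab by (simp add: coprime_const_polyD)
  ultimately show False
    using inf finite_nonsquarefree_pencil finite_subset by blast
qed

lemma finite_pencil_params_with_new_prime_factor:
  fixes a b x :: "'a::field_gcd poly poly"
  assumes "x \<noteq> 0"
  shows "finite {t. \<exists>p. prime p \<and> p dvd x \<and> p dvd a + smult [:t:] b \<and> \<not> (p dvd a \<and> p dvd b)}"
proof -
  define A where "A p = {t. p dvd a + smult [:t:] b \<and> \<not> (p dvd a \<and> p dvd b)}" for p
  have "finite (A p)" for p
  proof (rule finite_subsingleton)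
    fix t t'
    assume "t \<in> A p" "t' \<in> A p"
    then have "p dvd a + [:[:t:]:] * b" "p dvd a + [:[:t':]:] * b" "\<not> (p dvd a \<and> p dvd b)"
      by (simp_all add: A_def)
    then have "\<not> is_unit ([:[:t:]:] - [:[:t':]:])"
      using common_divisor_of_pencil_members by blast
    then show "t = t'"
      by (simp add: is_unit_const_poly_iff dvd_field_iff)
  qed
  moreover have "{t. \<exists>p. prime p \<and> p dvd x \<and> p dvd a + smult [:t:] b \<and> \<not> (p dvd a \<and> p dvd b)}
      \<subseteq> (\<Union>p\<in>prime_factors x. A p)"
    using assms by (auto simp: A_def in_prime_factors_iff)
  ultimately show ?thesis
    by (simp add: finite_subset)
qed

lemma rscale_sum: "rscale c (\<Sum>x\<in>A. f x) = (\<Sum>x\<in>A. rscale c (f x))"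
  by (rule sum_comp_morphism[symmetric, unfolded o_def]) (simp_all add: rscale_def smult_add_right)

lemma rscale_rscale: "rscale a (rscale b p) = rscale (a * b) p"
  by (simp add: rscale_def mult.commute)

lemma rscale_1: "rscale 1 p = p"
  by (simp add: rscale_def flip: one_pCons)

lemma exists_combination_with_only_common_prime_factors:
  fixes \<sigma> :: "nat \<Rightarrow> bipoly"
  assumes "x \<noteq> 0" "finite I"
  shows "\<exists>c. \<forall>p. prime p \<longrightarrow> p dvd x \<longrightarrow> p dvd (\<Sum>i\<in>I. rscale (c i) (\<sigma> i)) \<longrightarrow>
           (\<forall>i\<in>I. p dvd \<sigma> i)"
  using assms(2)
proof (induction I rule: finite_induct)
  case empty
  show ?case
    by simp
next
  case (insert j I)
  then obtain c where c: "\<And>p. prime p \<Longrightarrow> p dvd x \<Longrightarrow> p dvd (\<Sum>i\<in>I. rscale (c i) (\<sigma> i)) \<Longrightarrow>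
      \<forall>i\<in>I. p dvd \<sigma> i"
    by blast
  define g where "g = (\<Sum>i\<in>I. rscale (c i) (\<sigma> i))"
  obtain t where t: "\<And>p. prime p \<Longrightarrow> p dvd x \<Longrightarrow> p dvd g + rscale t (\<sigma> j) \<Longrightarrow>
      p dvd g \<and> p dvd \<sigma> j"
    using ex_new_if_finite[OF infinite_UNIV_char_0
        finite_pencil_params_with_new_prime_factor[OF assms(1), of g "\<sigma> j"]]
    by (auto simp: rscale_def)
  have "(\<Sum>i\<in>insert j I. rscale ((c(j := t)) i) (\<sigma> i)) = g + rscale t (\<sigma> j)"
    using insert.hyps by (simp add: g_def add.commute) (auto intro: sum.cong)
  then show ?case
    using c t unfolding g_def by (intro exI[of _ "c(j := t)"]) auto
qed

lemma exists_squarefree_pencil_member_coprime: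
  fixes f g y :: bipoly
  assumes cop: "coprime f g" and "y \<noteq> 0"
  obtains t where "squarefree (f + rscale t g)" "coprime (f + rscale t g) y"
proof -
  define bad where "bad = {t. \<not> squarefree (f + smult [:t:] g)} \<union>
    {t. \<exists>p. prime p \<and> p dvd y \<and> p dvd f + smult [:t:] g \<and> \<not> (p dvd f \<and> p dvd g)}"
  have "finite bad"
    unfolding bad_def using finite_nonsquarefree_pencil_bivariate[OF cop]
      finite_pencil_params_with_new_prime_factor[OF \<open>y \<noteq> 0\<close>] by blast
  then obtain t where "t \<notin> bad"
    using ex_new_if_finite[OF infinite_UNIV_char_0] by blast
  then show ?thesis
    using coprime_common_divisor[OF cop] \<open>y \<noteq> 0\<close>
    by (intro that coprime_if_no_common_prime_divisor)
      (auto simp: bad_def rscale_def not_prime_unit)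
qed

lemma exists_squarefree_pencil_member:
  fixes f g x :: bipoly
  assumes sqf: "squarefree f" and "x \<noteq> 0"
  obtains t where "squarefree (f + rscale t g)"
    "\<And>p. prime p \<Longrightarrow> p dvd x \<Longrightarrow> p dvd f + rscale t g \<Longrightarrow> p dvd f \<and> p dvd g"
proof -
  define d where "d = gcd f g"
  have "f \<noteq> 0"
    using sqf by auto
  then have "d \<noteq> 0"
    by (simp add: d_def)
  define f' g' where "f' = f div d" "g' = g div d"
  have f: "f = f' * d" and g: "g = g' * d"
    by (simp_all add: f'_g'_def d_def)
  have "coprime f' g'"
    using \<open>d \<noteq> 0\<close> f g unfolding d_def by (rule gcd_coprime)
  moreover have "d * x \<noteq> 0"
    using \<open>d \<noteq> 0\<close> assms(2) by simp
  ultimately obtain t where sqf_q: "squarefree (f' + rscale t g')"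
    and cop_q: "coprime (f' + rscale t g') (d * x)"
    by (rule exists_squarefree_pencil_member_coprime)
  have eq: "f + rscale t g = (f' + rscale t g') * d"
    by (simp add: f g rscale_def algebra_simps)
  have "squarefree d"
    using sqf by (rule squarefree_mono[rotated]) (simp add: d_def)
  with sqf_q cop_q have "squarefree (f + rscale t g)"
    unfolding eq by (intro squarefree_mult_coprime) simp_all
  moreover have "p dvd f \<and> p dvd g"
    if "prime p" "p dvd x" "p dvd f + rscale t g" for p
  proof -
    have "\<not> p dvd f' + rscale t g'"
      using cop_q that(1,2) by (meson coprime_common_divisor dvd_mult not_prime_unit)
    then have "p dvd d"
      using that by (simp add: eq prime_dvd_mult_iff)
    then show ?thesis
      by (simp add: f g)
  qed
  ultimately show ?thesis
    using that by simp
qed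

lemma exists_squarefree_combination:
  fixes \<sigma> :: "nat \<Rightarrow> bipoly"
  assumes "\<sigma> 0 \<noteq> 0" "squarefree (\<sigma> 1)" "1 \<le> n"
  obtains c where "squarefree (\<Sum>i\<in>{1..n}. rscale (c i) (\<sigma> i))"
    "\<And>p i. prime p \<Longrightarrow> p dvd (\<Sum>i\<in>{1..n}. rscale (c i) (\<sigma> i)) \<Longrightarrow> p dvd \<sigma> 0 \<Longrightarrow> i \<le> n \<Longrightarrow>
       p dvd \<sigma> i"
proof -
  obtain c where c: "\<And>p. prime p \<Longrightarrow> p dvd \<sigma> 0 \<Longrightarrow> p dvd (\<Sum>i\<in>{2..n}. rscale (c i) (\<sigma> i)) \<Longrightarrow>
      \<forall>i\<in>{2..n}. p dvd \<sigma> i"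
    using exists_combination_with_only_common_prime_factors[OF assms(1)] by blast
  define g where "g = (\<Sum>i\<in>{2..n}. rscale (c i) (\<sigma> i))"
  obtain t where t: "squarefree (\<sigma> 1 + rscale t g)"
    "\<And>p. prime p \<Longrightarrow> p dvd \<sigma> 0 \<Longrightarrow> p dvd \<sigma> 1 + rscale t g \<Longrightarrow> p dvd \<sigma> 1 \<and> p dvd g"
    using exists_squarefree_pencil_member[OF assms(2,1)] by metis
  define c' where "c' = (\<lambda>i. t * c i)(1 := 1)"
  have "{1..n} = insert 1 {2..n}"
    using assms(3) by auto
  then have sum: "(\<Sum>i\<in>{1..n}. rscale (c' i) (\<sigma> i)) = \<sigma> 1 + rscale t g"
    by (simp add: c'_def g_def rscale_sum rscale_rscale rscale_1)
  show ?thesis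
  proof (rule that)
    show "squarefree (\<Sum>i\<in>{1..n}. rscale (c' i) (\<sigma> i))"
      unfolding sum by (rule t(1))
    fix p i
    assume p: "prime p" "p dvd (\<Sum>i\<in>{1..n}. rscale (c' i) (\<sigma> i))" "p dvd \<sigma> 0" "i \<le> n"
    then have "p dvd \<sigma> 1" "p dvd g"
      using t(2) unfolding sum by blast+
    then have "i \<in> {2..n} \<Longrightarrow> p dvd \<sigma> i"
      using c[OF p(1,3)] by (simp add: g_def)
    with p(3,4) \<open>p dvd \<sigma> 1\<close> show "p dvd \<sigma> i"
      by (cases "i \<le> 1") (auto simp: le_Suc_eq)
  qed
qed

lemma nontrivial_linear_relation:
  fixes v :: "nat \<Rightarrow> 'a::euclidean_space"
  assumes "DIM('a) \<le> n"
  shows "\<exists>c. (\<Sum>i\<le>n. c i *\<^sub>R v i) = 0 \<and> (\<exists>i\<le>n. c i \<noteq> 0)"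
proof (cases "inj_on v {..n}")
  case False
  then obtain i j where ij: "i \<le> n" "j \<le> n" "i \<noteq> j" "v i = v j"
    by (auto simp: inj_on_def)
  define c where "c k = (if k = i then 1 else if k = j then -1 else 0 :: real)" for k
  have "(\<Sum>k\<le>n. c k *\<^sub>R v k) = (\<Sum>k\<in>{i, j}. c k *\<^sub>R v k)"
    by (intro sum.mono_neutral_right) (auto simp: c_def ij)
  also have "\<dots> = 0"
    using ij by (simp add: c_def)
  finally show ?thesis
    using ij by (intro exI[of _ c]) (auto simp: c_def)
next
  case True
  then have "card (v ` {..n}) > DIM('a)"
    using assms by (simp add: card_image)
  then have "dependent (v ` {..n})"
    by (rule dependent_biggerset)
  then obtain X u where X: "X \<subseteq> v ` {..n}" "(\<Sum>w\<in>X. u w *\<^sub>R w) = 0" "\<exists>w\<in>X. u w \<noteq> 0"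
    unfolding dependent_explicit by blast
  define I where "I = {i \<in> {..n}. v i \<in> X}"
  have X_eq: "X = v ` I"
    using X(1) by (auto simp: I_def)
  have "inj_on v I"
    using True by (rule inj_on_subset) (auto simp: I_def)
  define c where "c i = (if i \<in> I then u (v i) else 0)" for i
  have "(\<Sum>i\<le>n. c i *\<^sub>R v i) = (\<Sum>i\<in>I. u (v i) *\<^sub>R v i)"
    by (intro sum.mono_neutral_cong_right) (auto simp: c_def I_def)
  also have "\<dots> = (\<Sum>w\<in>X. u w *\<^sub>R w)"
    unfolding X_eq using \<open>inj_on v I\<close> by (simp add: sum.reindex)
  finally show ?thesis
    using X unfolding X_eq by (intro exI[of _ c]) (auto simp: c_def I_def)
qed

lemma nontrivial_linear_relation_tdeg_le_2:
  fixes q :: "nat \<Rightarrow> bipoly"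
  assumes deg: "\<And>i. i \<le> 6 \<Longrightarrow> tdeg (q i) \<le> 2"
  shows "\<exists>c. (\<Sum>i\<le>6. rscale (c i) (q i)) = 0 \<and> (\<exists>i\<le>6. c i \<noteq> 0)"
proof -
  define cf where "cf p a b = coeff (coeff p b) a" for p :: bipoly and a b
  define v where "v i = (cf (q i) 0 0, cf (q i) 1 0, cf (q i) 0 1, cf (q i) 2 0, cf (q i) 1 1,
    cf (q i) 0 2)" for i
  obtain c where c: "(\<Sum>i\<le>6. c i *\<^sub>R v i) = 0" "\<exists>i\<le>6. c i \<noteq> 0"
    using nontrivial_linear_relation[of 6 v] by auto
  have "(\<Sum>i\<le>6. c i * cf (q i) a b) = 0" if "a + b \<le> 2" for a b
  proof -
    have "(a, b) \<in> {(0, 0), (1, 0), (0, 1), (2, 0), (1, 1), (0, 2)}"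
      using that by (cases a; cases b) (auto simp: numeral_2_eq_2 le_Suc_eq)
    then show ?thesis
      using c(1) by (auto simp: v_def fst_sum snd_sum prod_eq_iff)
  qed
  moreover have "cf (q i) a b = 0" if "2 < a + b" "i \<le> 6" for i a b
    using le_tdeg[of "q i" b a] deg[OF that(2)] that(1) unfolding cf_def by force
  ultimately have "coeff (coeff (\<Sum>i\<le>6. rscale (c i) (q i)) b) a = 0" for a b
    by (cases "a + b \<le> 2") (simp_all add: coeff_sum rscale_def cf_def)
  then have "(\<Sum>i\<le>6. rscale (c i) (q i)) = 0"
    by (intro poly_eqI) simp
  then show ?thesis
    using c(2) by blast
qed

lemma tdeg_common_divisor_le:
  fixes \<sigma> :: "nat \<Rightarrow> bipoly"
  assumes indep: "\<forall>c :: nat \<Rightarrow> real. (\<Sum>i\<le>6. rscale (c i) (\<sigma> i)) = 0 \<longrightarrow> (\<forall>i\<le>6. c i = 0)"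
    and deg: "\<And>i. i \<le> 6 \<Longrightarrow> tdeg (\<sigma> i) = k"
    and nz: "\<And>i. i \<le> 6 \<Longrightarrow> \<sigma> i \<noteq> 0"
    and dvd: "\<And>i. i \<le> 6 \<Longrightarrow> r dvd \<sigma> i"
  shows "tdeg r + 3 \<le> k"
proof (rule ccontr)
  assume "\<not> tdeg r + 3 \<le> k"
  define q where "q i = \<sigma> i div r" for i
  have q: "\<sigma> i = r * q i" if "i \<le> 6" for i
    using dvd[OF that] by (simp add: q_def)
  have "tdeg (q i) \<le> 2" if "i \<le> 6" for i
  proof -
    have "r \<noteq> 0" "q i \<noteq> 0"
      using nz[OF that] q[OF that] by auto
    then have "tdeg r + tdeg (q i) = k"
      using deg[OF that] q[OF that] by (simp add: tdeg_mult)
    with \<open>\<not> tdeg r + 3 \<le> k\<close> show ?thesis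
      by linarith
  qed
  then obtain c where c: "(\<Sum>i\<le>6. rscale (c i) (q i)) = 0" "\<exists>i\<le>6. c i \<noteq> 0"
    using nontrivial_linear_relation_tdeg_le_2 by blast
  have "(\<Sum>i\<le>6. rscale (c i) (\<sigma> i)) = r * (\<Sum>i\<le>6. rscale (c i) (q i))"
    by (simp add: q rscale_def sum_distrib_left)
  with c indep show False
    by auto
qed

theorem mainTheorem7:
  fixes \<sigma> :: "nat \<Rightarrow> bipoly" and k :: nat
  assumes indep: "\<forall>c :: nat \<Rightarrow> real. (\<Sum>i\<le>6. rscale (c i) (\<sigma> i)) = 0 \<longrightarrow> (\<forall>i\<le>6. c i = 0)"
    and deg: "\<forall>i\<le>6. tdeg (\<sigma> i) = k"
    and sqfree: "\<forall>i\<le>6. \<not> has_multiple_factor (\<sigma> i)"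
  shows "\<exists>s. (\<exists>c :: nat \<Rightarrow> real. s = (\<Sum>i\<in>{1..6}. rscale (c i) (\<sigma> i)))
           \<and> \<not> has_multiple_factor s
           \<and> (\<exists>\<gamma> \<gamma>0 r. s = \<gamma> * r \<and> \<sigma> 0 = \<gamma>0 * r \<and> coprime \<gamma> \<gamma>0 \<and> tdeg \<gamma>0 \<ge> 3)"
proof -
  have sq: "squarefree (\<sigma> i)" and nz: "\<sigma> i \<noteq> 0" if "i \<le> 6" for i
    using sqfree that by (auto simp: not_has_multiple_factor_iff_squarefree)
  obtain c where sq_s: "squarefree (\<Sum>i\<in>{1..6}. rscale (c i) (\<sigma> i))"
    and common: "\<And>p i. prime p \<Longrightarrow> p dvd (\<Sum>i\<in>{1..6}. rscale (c i) (\<sigma> i)) \<Longrightarrow> p dvd \<sigma> 0 \<Longrightarrow>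
      i \<le> 6 \<Longrightarrow> p dvd \<sigma> i"
    using exists_squarefree_combination[of \<sigma> 6] nz[of 0] sq[of 1] by auto
  define s where "s = (\<Sum>i\<in>{1..6}. rscale (c i) (\<sigma> i))"
  define r where "r = gcd s (\<sigma> 0)"
  have "r dvd \<sigma> i" if "i \<le> 6" for i
    unfolding r_def using sq[of 0] common[OF _ _ _ that]
    by (intro gcd_dvd_if_common_prime_divisors_dvd) (simp_all add: s_def)
  then have "tdeg r + 3 \<le> k"
    using tdeg_common_divisor_le[OF indep] deg nz by blast
  define \<gamma> \<gamma>0 where "\<gamma> = s div r" "\<gamma>0 = \<sigma> 0 div r"
  have s: "s = \<gamma> * r" and \<sigma>0: "\<sigma> 0 = \<gamma>0 * r"
    by (simp_all add: \<gamma>_\<gamma>0_def r_def)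
  have "tdeg \<gamma>0 + tdeg r = k"
    using nz[of 0] deg \<sigma>0 by (auto simp: tdeg_mult)
  with \<open>tdeg r + 3 \<le> k\<close> have "3 \<le> tdeg \<gamma>0"
    by linarith
  moreover have "coprime \<gamma> \<gamma>0"
    using nz[of 0] s \<sigma>0 unfolding r_def by (intro gcd_coprime) simp_all
  moreover have "\<not> has_multiple_factor s"
    using sq_s by (simp add: s_def not_has_multiple_factor_iff_squarefree)
  ultimately show ?thesis
    using s \<sigma>0 s_def by blast
qed

end
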